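(* Let $\mathcal{M}=\langle M,\circ,e\rangle$ be an effective mge monoid and let $\mathcal{T}=\langle\Sigma^*\times\mathcal{M},Q,I,F,\Delta\rangle$ be a trimmed functional monoidal finite-state transducer. If $p\in Q$, $m\in M$ and $\langle p,\langle\varepsilon,m\rangle,p\rangle\in\Delta^*$, then $m=e$.
   Context: A tuple $\langle m_1,\dots,m_n\rangle$ is equalizable if some $\langle x_1,\dots,x_n\rangle$ (an equalizer) satisfies $m_1x_1=\dots=m_nx_n$; an equalizer is a most general equalizer (mge) if every equalizer has the form $\langle x_1x,\dots,x_nx\rangle$, $x\in M$. An mge monoid has right cancellation ($ac=bc\Rightarrow a=b$) and an mge for every equalizable pair; it is effective if elements form a recursive subset of $\mathbb{N}$ with computable operation, equality and equalizability are decidable, a computable function returns an mge of each equalizable pair, and inverses of invertible elements are computable. The transducer has finite $\Delta\subseteq Q\times((\Sigma\cup\{\varepsilon\})\times M)\times Q$; $\Delta^*$ is the generalized transition relation: the least set containing $\langle q,\langle\varepsilon,e\rangle,q\rangle$ for all $q$ and closed under $\langle q_1,\langle u,w\rangle,q_2\rangle\in\Delta^*$, $\langle q_2,\langle a,m\rangle,q_3\rangle\in\Delta\Rightarrow\langle q_1,\langle ua,wm\rangle,q_3\rangle\in\Delta^*$. $L(\mathcal{T})$ is the set of labels of such paths from $I$ to $F$; $\mathcal{T}$ is functional if $L(\mathcal{T})$ is the graph of a partial function; trimmed if every state is reachable from an initial state and can reach a final state. *)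

theory Defs
  imports Main
begin

definition equalizable_pair :: "'m::monoid_mult \<Rightarrow> 'm \<Rightarrow> bool" where
  "equalizable_pair a b \<longleftrightarrow> (\<exists>x y. a * x = b * y)"

definition is_mge_pair :: "'m::monoid_mult \<Rightarrow> 'm \<Rightarrow> 'm \<Rightarrow> 'm \<Rightarrow> bool" where
  "is_mge_pair a b x y \<longleftrightarrow> a * x = b * y \<and>
     (\<forall>x' y'. a * x' = b * y' \<longrightarrow> (\<exists>z. x' = x * z \<and> y' = y * z))"

definition mge_monoid :: "'m::monoid_mult itself \<Rightarrow> bool" where
  "mge_monoid (_::'m itself) \<longleftrightarrow>
     (\<forall>a b c :: 'm. a * c = b * c \<longrightarrow> a = b) \<and>
     (\<forall>a b :: 'm. equalizable_pair a b \<longrightarrow> (\<exists>x y. is_mge_pair a b x y))"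

text \<open>Generalized transition relation Delta*; None encodes epsilon.\<close>

inductive_set gen_trans ::
  "('q \<times> ('a option \<times> 'm::monoid_mult) \<times> 'q) set \<Rightarrow> ('q \<times> ('a list \<times> 'm) \<times> 'q) set"
  for \<Delta> where
  refl: "(q, ([], 1), q) \<in> gen_trans \<Delta>"
| step: "(q1, (u, w), q2) \<in> gen_trans \<Delta> \<Longrightarrow> (q2, (a, m), q3) \<in> \<Delta> \<Longrightarrow>
         (q1, ((case a of None \<Rightarrow> u | Some x \<Rightarrow> u @ [x]), w * m), q3) \<in> gen_trans \<Delta>"

definition transducer ::
  "'a set \<Rightarrow> 'q set \<Rightarrow> 'q set \<Rightarrow> 'q set \<Rightarrow> ('q \<times> ('a option \<times> 'm::monoid_mult) \<times> 'q) set \<Rightarrow> bool" where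
  "transducer \<Sigma> Q I F \<Delta> \<longleftrightarrow> finite \<Sigma> \<and> finite Q \<and> I \<subseteq> Q \<and> F \<subseteq> Q \<and> finite \<Delta> \<and>
     (\<forall>(q, (a, m), q') \<in> \<Delta>. q \<in> Q \<and> q' \<in> Q \<and> set_option a \<subseteq> \<Sigma>)"

definition lang ::
  "'q set \<Rightarrow> 'q set \<Rightarrow> ('q \<times> ('a option \<times> 'm::monoid_mult) \<times> 'q) set \<Rightarrow> ('a list \<times> 'm) set" where
  "lang I F \<Delta> = {(u, w). \<exists>i\<in>I. \<exists>f\<in>F. (i, (u, w), f) \<in> gen_trans \<Delta>}"

definition functional ::
  "'q set \<Rightarrow> 'q set \<Rightarrow> ('q \<times> ('a option \<times> 'm::monoid_mult) \<times> 'q) set \<Rightarrow> bool" where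
  "functional I F \<Delta> \<longleftrightarrow>
     (\<forall>u w w'. (u, w) \<in> lang I F \<Delta> \<longrightarrow> (u, w') \<in> lang I F \<Delta> \<longrightarrow> w = w')"

definition trimmed ::
  "'q set \<Rightarrow> 'q set \<Rightarrow> 'q set \<Rightarrow> ('q \<times> ('a option \<times> 'm::monoid_mult) \<times> 'q) set \<Rightarrow> bool" where
  "trimmed Q I F \<Delta> \<longleftrightarrow> (\<forall>q\<in>Q.
     (\<exists>i\<in>I. \<exists>l. (i, l, q) \<in> gen_trans \<Delta>) \<and> (\<exists>f\<in>F. \<exists>l. (q, l, f) \<in> gen_trans \<Delta>))"

end

theory Submission
  imports Defs
begin

text \<open>Extending the loop \<open>p \<rightarrow> p\<close> by a path from an initial state to \<open>p\<close> and a path from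
  \<open>p\<close> to a final state gives two accepting paths with the same input \<open>u v\<close> and outputs
  \<open>a m b\<close> and \<open>a b\<close>. Functionality forces \<open>a m b = a b\<close>, right cancellation gives \<open>a m = a\<close>,
  and the most general equalizer of \<open>(a, a)\<close> is necessarily of the form \<open>(x, x)\<close>, through
  which both equalizers \<open>(1, 1)\<close> and \<open>(m, 1)\<close> factor; hence \<open>m = 1\<close>.\<close>

lemma gen_trans_append:
  assumes "(q1, (u, w), q2) \<in> gen_trans \<Delta>" and "(q2, (v, w'), q3) \<in> gen_trans \<Delta>"
  shows "(q1, (u @ v, w * w'), q3) \<in> gen_trans \<Delta>"
  using assms(2,1)
proof (induction q2 v w' q3 rule: gen_trans.induct)
  case (refl q)
  then show ?case by simp
next
  case (step q2 v w' q3 a m q4)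
  have "(q1, (u @ v, w * w'), q3) \<in> gen_trans \<Delta>" using step.IH step.prems .
  from gen_trans.step[OF this step.hyps(2)] show ?case
    by (cases a) (auto simp: mult.assoc)
qed

lemma mge_monoid_right_cancel:
  fixes a b c :: "'m::monoid_mult"
  assumes "mge_monoid TYPE('m)" and "a * c = b * c"
  shows "a = b"
  using assms unfolding mge_monoid_def by blast

lemma mge_monoid_right_inverse_commute:
  fixes x z :: "'m::monoid_mult"
  assumes "mge_monoid TYPE('m)" and "x * z = 1"
  shows "z * x = 1"
proof -
  have "(z * x) * z = 1 * z" using assms(2) by (simp add: mult.assoc)
  then show ?thesis using mge_monoid_right_cancel[OF assms(1)] by blast
qed

lemma mge_of_diagonal_pair:
  fixes a x y :: "'m::monoid_mult"
  assumes "mge_monoid TYPE('m)" and "is_mge_pair a a x y"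
  shows "x = y"
proof -
  obtain z where xz: "1 = x * z" and yz: "1 = y * z"
    using assms(2) unfolding is_mge_pair_def by (metis mult_1_right)
  have zx: "z * x = 1" using mge_monoid_right_inverse_commute[OF assms(1) xz[symmetric]] .
  have "x = (y * z) * x" using yz by simp
  also have "\<dots> = y" using zx by (simp add: mult.assoc)
  finally show ?thesis .
qed

lemma mge_monoid_right_id_eq_1:
  fixes a m :: "'m::monoid_mult"
  assumes "mge_monoid TYPE('m)" and "a * m = a"
  shows "m = 1"
proof -
  have "equalizable_pair a a" unfolding equalizable_pair_def by blast
  then obtain x y where mge: "is_mge_pair a a x y"
    using assms(1) unfolding mge_monoid_def by blast
  have "x = y" using mge_of_diagonal_pair[OF assms(1) mge] .
  moreover obtain z where "m = x * z" and "1 = y * z"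
    using mge assms(2) unfolding is_mge_pair_def by (metis mult_1_right)
  ultimately show ?thesis by simp
qed

theorem lemma6:
  fixes \<Sigma> :: "'a set" and Q I F :: "'q set"
    and \<Delta> :: "('q \<times> ('a option \<times> 'm::monoid_mult) \<times> 'q) set"
    and p :: 'q and m :: 'm
  assumes "mge_monoid TYPE('m)"
    and "transducer \<Sigma> Q I F \<Delta>"
    and "trimmed Q I F \<Delta>"
    and "functional I F \<Delta>"
    and "p \<in> Q"
    and "(p, ([], m), p) \<in> gen_trans \<Delta>"
  shows "m = 1"
proof -
  obtain i u a where i: "i \<in> I" and to_p: "(i, (u, a), p) \<in> gen_trans \<Delta>"
    using assms(3,5) unfolding trimmed_def by fastforce
  obtain f v b where f: "f \<in> F" and from_p: "(p, (v, b), f) \<in> gen_trans \<Delta>"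
    using assms(3,5) unfolding trimmed_def by fastforce
  have "(i, (u @ v, a * b), f) \<in> gen_trans \<Delta>"
    using gen_trans_append[OF to_p from_p] .
  moreover have "(i, (u @ v, a * m * b), f) \<in> gen_trans \<Delta>"
    using gen_trans_append[OF gen_trans_append[OF to_p assms(6)] from_p] by (simp add: mult.assoc)
  ultimately have "a * m * b = a * b"
    using assms(4) i f unfolding functional_def lang_def by blast
  then have "a * m = a" by (rule mge_monoid_right_cancel[OF assms(1)])
  then show ?thesis by (rule mge_monoid_right_id_eq_1[OF assms(1)])
qed

end
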